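(* Let $T>0$ and constants $K_1\ge0$, $K_2\ne0$ with $K_1+K_2\ge0$. For $t\in[0,T]$ let $$\Lambda(t,T)=1+\frac{K_1}{K_2}\Big(1-e^{-\frac{K_2(T-t)}{2}}\Big)+\frac{K_1}{K_2}\Big(1-e^{-\frac{K_2t}{2}}\Big)+\Big(\frac{K_1}{K_2}\Big)^2\Big[\Big(1-e^{-\frac{K_2t}{2}}\Big)+\frac12\Big(e^{-\frac{K_2(T+t)}{2}}-e^{-\frac{K_2(T-t)}{2}}\Big)\Big].$$ (i) If $K_2<0$, then $t\mapsto\Lambda(t,T)$ is strictly increasing on $[0,T]$. (ii) If $K_2>0$, then the maximum of $t\mapsto\Lambda(t,T)$ over $[0,T]$ is attained at a point $t_0\in(0,T)$. *)

theory Defs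
  imports Complex_Main
begin

definition Lambda :: "real \<Rightarrow> real \<Rightarrow> real \<Rightarrow> real \<Rightarrow> real" where
  "Lambda K1 K2 T t =
     1 + (K1 / K2) * (1 - exp (- (K2 * (T - t) / 2)))
       + (K1 / K2) * (1 - exp (- (K2 * t / 2)))
       + (K1 / K2)^2 * ((1 - exp (- (K2 * t / 2)))
            + (1/2) * (exp (- (K2 * (T + t) / 2)) - exp (- (K2 * (T - t) / 2))))"

end

theory Submission
  imports Defs
begin

text \<open>Substituting \<open>u = exp (- K2 t / 2)\<close> turns \<open>\<Lambda>(\<cdot>, T)\<close> into \<open>u \<mapsto> c + A u - B / u\<close>, where
  \<open>A\<close> and \<open>B\<close> depend on \<open>r = K1 / K2\<close> and \<open>E = exp (- K2 T / 2)\<close>. Such a function has increment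
  \<open>(v - u) (A + B / (u v))\<close>. For \<open>K2 < 0\<close> the second factor is positive on \<open>[1, E]\<close>, which the
  substitution maps increasingly onto from \<open>[0, T]\<close>. For \<open>K2 > 0\<close> and \<open>K1 > 0\<close> we have
  \<open>A < 0 < B\<close>, so the function peaks at \<open>u = sqrt (B / - A)\<close>, and the signs of \<open>A + B\<close> and
  \<open>A E\<^sup>2 + B\<close> place this peak strictly between \<open>E\<close> and \<open>1\<close>.\<close>

lemma affine_minus_reciprocal_diff:
  fixes c A B u v :: real
  assumes "u > 0" and "v > 0"
  shows "(c + A*v - B/v) - (c + A*u - B/u) = (v - u) * (A + B/(u*v))"
  using assms by (simp add: field_simps)

lemma strict_mono_on_affine_minus_reciprocal:
  fixes c A B a b :: real
  assumes "a > 0" and "A + B/a^2 \<ge> 0" and "A + B/b^2 > 0"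
  shows "strict_mono_on {a..b} (\<lambda>u. c + A*u - B/u)"
proof (rule strict_mono_onI)
  fix u v assume uv: "u \<in> {a..b}" "v \<in> {a..b}" "u < v"
  have u0: "u > 0" and v0: "v > 0" using uv assms(1) by auto
  have "a*a < u*v" by (rule mult_le_less_imp_less) (use uv assms(1) in auto)
  hence lower: "a^2 < u*v" by (simp add: power2_eq_square)
  have "u*v \<le> b*b" by (rule mult_mono) (use uv u0 in auto)
  hence upper: "u*v \<le> b^2" by (simp add: power2_eq_square)
  have uv0: "u*v > 0" using u0 v0 by simp
  have "A + B/(u*v) > 0"
  proof (cases "B \<ge> 0")
    case True
    have "b^2 > 0" using upper uv0 by linarith
    hence "B/b^2 \<le> B/(u*v)" using True upper uv0 by (intro divide_left_mono) simp_all
    thus ?thesis using assms(3) by linarith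
  next
    case False
    have "B/a^2 < B/(u*v)" using False lower assms(1) uv0
      by (intro divide_strict_left_mono_neg) simp_all
    thus ?thesis using assms(2) by linarith
  qed
  with uv(3) have "(v - u) * (A + B/(u*v)) > 0" by simp
  with affine_minus_reciprocal_diff[OF u0 v0, of c A B]
  show "c + A*u - B/u < c + A*v - B/v" by linarith
qed

lemma affine_minus_reciprocal_le_at_sqrt:
  fixes c A B u :: real
  assumes "A < 0" and "B > 0" and "u > 0"
  defines "s \<equiv> sqrt (B / - A)"
  shows "c + A*u - B/u \<le> c + A*s - B/s"
proof -
  have ratio_pos: "B / - A > 0" using assms(1,2) by (intro divide_pos_pos) auto
  hence s0: "s > 0" unfolding s_def by simp
  have "s^2 = B / - A" unfolding s_def using ratio_pos by simp
  hence B_eq: "B = - A * s^2" using assms(1) by (simp add: field_simps)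
  have "(c + A*s - B/s) - (c + A*u - B/u) = (s - u) * (A + B/(u*s))"
    by (rule affine_minus_reciprocal_diff[OF assms(3) s0])
  also have "\<dots> = - A * (s - u)^2 / u"
    unfolding B_eq using s0 assms(3) by (simp add: field_simps power2_eq_square)
  also have "\<dots> \<ge> 0" using assms(1,3) by (intro divide_nonneg_pos mult_nonneg_nonneg) auto
  finally show ?thesis by simp
qed

lemma Lambda_eq_affine_minus_reciprocal:
  fixes K1 K2 T t :: real
  assumes "K2 \<noteq> 0"
  defines "r \<equiv> K1 / K2" and "E \<equiv> exp (- (K2*T/2))"
  defines "A \<equiv> - r - r^2 + r^2*E/2" and "B \<equiv> E * (r + r^2/2)"
  shows "Lambda K1 K2 T t = 1 + 2*r + r^2 + A * exp (- (K2*t/2)) - B / exp (- (K2*t/2))"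
proof -
  define u where "u = exp (- (K2*t/2))"
  have u0: "u > 0" unfolding u_def by simp
  have exp_T_minus_t: "exp (- (K2 * (T - t) / 2)) = E / u"
    unfolding E_def u_def by (simp add: exp_diff[symmetric] field_simps)
  have exp_T_plus_t: "exp (- (K2 * (T + t) / 2)) = E * u"
    unfolding E_def u_def by (simp add: exp_add[symmetric] algebra_simps)
  show ?thesis
    unfolding Lambda_def exp_T_minus_t exp_T_plus_t u_def[symmetric] r_def[symmetric] A_def B_def
    using u0 by (simp add: field_simps power2_eq_square)
qed

lemma Lambda_coefficient_sums:
  fixes r E :: real
  assumes "E > 0"
  defines "A \<equiv> - r - r^2 + r^2*E/2" and "B \<equiv> E * (r + r^2/2)"
  shows "A + B = r * (1 + r) * (E - 1)"
    and "A + B/E^2 = (r * (1 - E) + r^2 * (1 - E)^2 / 2) / E"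
  unfolding A_def B_def using assms(1) by (simp_all add: field_simps power2_eq_square)

theorem Lambda_strict_mono_if_neg:
  fixes T K1 K2 :: real
  assumes "T > 0" and "K2 < 0" and "K1 + K2 \<ge> 0"
  shows "strict_mono_on {0..T} (\<lambda>t. Lambda K1 K2 T t)"
proof -
  define r where "r = K1 / K2"
  define E where "E = exp (- (K2*T/2))"
  define A where "A = - r - r^2 + r^2*E/2"
  define B where "B = E * (r + r^2/2)"
  have r_le: "r \<le> -1" unfolding r_def using assms(2,3) by (simp add: divide_le_eq)
  have E_gt: "E > 1" unfolding E_def using assms(1,2) by (simp add: mult_neg_pos)
  have "A + B/1^2 \<ge> 0"
    using Lambda_coefficient_sums(1)[of E r] r_le E_gt
    by (simp add: A_def B_def mult_nonpos_nonpos zero_le_mult_iff)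
  moreover have "A + B/E^2 > 0"
    using Lambda_coefficient_sums(2)[of E r] r_le E_gt
    by (simp add: A_def B_def mult_neg_neg add_pos_nonneg)
  ultimately have mono: "strict_mono_on {1..E} (\<lambda>u. 1 + 2*r + r^2 + A*u - B/u)"
    by (rule strict_mono_on_affine_minus_reciprocal[rotated]) simp
  show ?thesis
  proof (rule strict_mono_onI)
    fix x y assume xy: "x \<in> {0..T}" "y \<in> {0..T}" "x < y"
    have "exp (- (K2*x/2)) \<in> {1..E}" "exp (- (K2*y/2)) \<in> {1..E}"
      unfolding E_def using xy assms(2) by (auto simp: mult_nonpos_nonneg mult_left_mono_neg)
    moreover have "exp (- (K2*x/2)) < exp (- (K2*y/2))"
      using xy assms(2) by (simp add: mult_strict_right_mono_neg)
    ultimately show "Lambda K1 K2 T x < Lambda K1 K2 T y"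
      using strict_mono_onD[OF mono] assms(2)
      by (simp add: Lambda_eq_affine_minus_reciprocal r_def E_def A_def B_def)
  qed
qed

lemma exp_neg_half_scaled_attains:
  fixes K2 T s :: real
  assumes "K2 > 0" and "exp (- (K2*T/2)) < s" and "s < 1"
  shows "\<exists>t0\<in>{0<..<T}. exp (- (K2*t0/2)) = s"
proof
  define t0 where "t0 = - 2 * ln s / K2"
  have s0: "s > 0" using assms(2) exp_gt_zero less_trans by blast
  show "exp (- (K2*t0/2)) = s" unfolding t0_def using assms(1) s0 by simp
  have "ln s < 0" using s0 assms(3) by simp
  moreover have "ln (exp (- (K2*T/2))) < ln s" using assms(2) s0 by (subst ln_less_cancel_iff) auto
  ultimately show "t0 \<in> {0<..<T}"
    unfolding t0_def using assms(1) by (simp add: field_simps)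
qed

theorem Lambda_max_interior_if_pos:
  fixes T K1 K2 :: real
  assumes "T > 0" and "K1 \<ge> 0" and "K2 > 0"
  shows "\<exists>t0\<in>{0<..<T}. \<forall>t\<in>{0..T}. Lambda K1 K2 T t \<le> Lambda K1 K2 T t0"
proof (cases "K1 = 0")
  case True
  then have "Lambda K1 K2 T t = 1" for t unfolding Lambda_def by simp
  then show ?thesis using assms(1) by (intro bexI[of _ "T/2"]) auto
next
  case False
  define r where "r = K1 / K2"
  define E where "E = exp (- (K2*T/2))"
  define A where "A = - r - r^2 + r^2*E/2"
  define B where "B = E * (r + r^2/2)"
  define s where "s = sqrt (B / - A)"
  have r_pos: "r > 0" unfolding r_def using False assms(2,3) by simp
  have E_pos: "E > 0" unfolding E_def by simp
  have E_lt: "E < 1" unfolding E_def using assms(1,3) by simp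
  have sum_neg: "A + B < 0"
    using Lambda_coefficient_sums(1)[of E r] r_pos E_lt E_pos
    by (simp add: A_def B_def mult_pos_neg)
  have B_pos: "B > 0" unfolding B_def using E_pos r_pos by (simp add: add_pos_pos)
  have A_neg: "A < 0" using sum_neg B_pos by linarith
  have s_nonneg: "s \<ge> 0" unfolding s_def using A_neg B_pos by (simp add: divide_pos_neg less_imp_le)
  have "A + B/E^2 > 0"
    using Lambda_coefficient_sums(2)[of E r] r_pos E_lt E_pos
    by (simp add: A_def B_def add_pos_nonneg)
  then have "E^2 < s^2"
    unfolding s_def using A_neg B_pos E_pos by (simp add: field_simps)
  then have "E < s" using s_nonneg power2_less_imp_less by blast
  moreover have "s^2 < 1"
    unfolding s_def using A_neg B_pos sum_neg by (simp add: field_simps)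
  then have "s < 1" using s_nonneg by (simp add: power_less_one_iff)
  ultimately obtain t0 where t0: "t0 \<in> {0<..<T}" "exp (- (K2*t0/2)) = s"
    using exp_neg_half_scaled_attains[OF assms(3)] unfolding E_def by blast
  have "Lambda K1 K2 T t \<le> Lambda K1 K2 T t0" for t
    using affine_minus_reciprocal_le_at_sqrt[OF A_neg B_pos, of "exp (- (K2*t/2))" "1 + 2*r + r^2"]
      t0(2) assms(3)
    by (simp add: Lambda_eq_affine_minus_reciprocal r_def E_def A_def B_def s_def)
  with t0(1) show ?thesis by blast
qed

theorem proposition1:
  fixes T K1 K2 :: real
  assumes "T > 0" and "K1 \<ge> 0" and "K2 \<noteq> 0" and "K1 + K2 \<ge> 0"
  shows "(K2 < 0 \<longrightarrow> strict_mono_on {0..T} (\<lambda>t. Lambda K1 K2 T t))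
       \<and> (K2 > 0 \<longrightarrow> (\<exists>t0\<in>{0<..<T}. \<forall>t\<in>{0..T}. Lambda K1 K2 T t \<le> Lambda K1 K2 T t0))"
  using Lambda_strict_mono_if_neg[OF assms(1) _ assms(4)] Lambda_max_interior_if_pos[OF assms(1,2)]
  by blast

end
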